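(* Suppose $\|\mu_a\|_\infty,\|\widehat\mu_a\|_\infty\le B<\infty$ a.s. for all $a$, and $\mathbb{P}$ satisfies the margin condition with some $\kappa>0$, $\alpha>0$. Let $C^*\in\mathcal{C}_k^*$. Then for each $a\in\mathcal{A}$, $$\mathbb{P}\big|\Pi_{C^*,a}(\widehat\mu)-\Pi_{C^*,a}(\mu)\big|\lesssim\max_j\big\|\mathbb{1}\{\zeta_j(\widehat\mu;C^* )>0\}-\mathbb{1}\{\zeta_j(\mu;C^* )>0\}\big\|_\infty\sum_a\|\widehat\mu_a-\mu_a\|_{\mathbb{P},1}+\sum_a\|\widehat\mu_a-\mu_a\|_\infty^\alpha.$$
   Context: $Z=(Y,A,X)\sim\mathbb{P}$, $A\in\mathcal{A}=\{1,\dots,p\}$; $\mu_a(X)=\mathbb{E}(Y\mid X,A=a)$, $\mu=(\mu_1(X),\dots,\mu_p(X))^\top$, and $\widehat\mu$ an estimator of $\mu$ (held fixed under $\mathbb{P}$). Codebooks $C=\{c_1,\dots,c_k\}\subset\mathbb{R}^p$; $\mathcal{C}_k$ the codebooks of size $k$ in the image of $\mu$; $\Pi_C(x)=\arg\min_{c\in C}\|c-x\|_2^2$ and $\Pi_{C,a}(x)$ its $a$-th coordinate; $R(C)=\mathbb{E}\|\mu-\Pi_C(\mu)\|_2^2$; $\mathcal{C}_k^*$ its set of minimizers. $\zeta_j(\bar\mu;C)=\min_{i\ne j}\|\bar\mu-c_i\|_2-\|\bar\mu-c_j\|_2$. $V_j(C^* )=\{x:\|x-c_j^*\|_2\le\|x-c_i^*\|_2\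 \forall i\ne j\}$; $N_{C^*}(t)=\bigcup_j\{x\in V_j(C^* ):|\,\|x-c_j^*\|_2-\min_{i\ne j}\|x-c_i^*\|_2\,|\le t\}$; margin condition (radius $\kappa$, rate $\alpha$): for $0\le t\le\kappa$, $\sup_{C^*\in\mathcal{C}_k^*}\mathbb{P}(\mu\in N_{C^*}(t))\lesssim t^\alpha$. $\|f\|_{\mathbb{P},1}=\int|f|d\mathbb{P}$, $\|\cdot\|_\infty$ sup norm, $\lesssim$ inequality up to a multiplicative constant. *)

theory Defs
  imports "HOL-Probability.Probability"
begin

text \<open>Codebooks are indexed: C :: nat => real^'p, with centres C 0, ..., C (k-1).
  The coordinate index set A = {1..p} is the finite type 'p.\<close>

definition nearest_idx :: "(nat \<Rightarrow> 'a::metric_space) \<Rightarrow> nat \<Rightarrow> 'a \<Rightarrow> nat" where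
  "nearest_idx C k x = (LEAST j. j < k \<and> (\<forall>i<k. dist x (C j) \<le> dist x (C i)))"

definition proj :: "(nat \<Rightarrow> 'a::metric_space) \<Rightarrow> nat \<Rightarrow> 'a \<Rightarrow> 'a" where
  "proj C k x = C (nearest_idx C k x)"

definition zeta :: "(nat \<Rightarrow> 'a::metric_space) \<Rightarrow> nat \<Rightarrow> nat \<Rightarrow> 'a \<Rightarrow> real" where
  "zeta C k j x = Min {dist x (C i) | i. i < k \<and> i \<noteq> j} - dist x (C j)"

definition voronoi :: "(nat \<Rightarrow> 'a::metric_space) \<Rightarrow> nat \<Rightarrow> nat \<Rightarrow> 'a set" where
  "voronoi C k j = {x. \<forall>i<k. i \<noteq> j \<longrightarrow> dist x (C j) \<le> dist x (C i)}"

definition margin_nbhd :: "(nat \<Rightarrow> 'a::metric_space) \<Rightarrow> nat \<Rightarrow> real \<Rightarrow> 'a set" where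
  "margin_nbhd C k t = (\<Union>j<k. {x \<in> voronoi C k j.
      \<bar>dist x (C j) - Min {dist x (C i) | i. i < k \<and> i \<noteq> j}\<bar> \<le> t})"

definition risk :: "'w measure \<Rightarrow> ('w \<Rightarrow> 'a::real_normed_vector) \<Rightarrow> (nat \<Rightarrow> 'a) \<Rightarrow> nat \<Rightarrow> real" where
  "risk M mu C k = integral\<^sup>L M (\<lambda>\<omega>. (norm (mu \<omega> - proj C k (mu \<omega>)))\<^sup>2)"

definition codebook :: "'w measure \<Rightarrow> ('w \<Rightarrow> 'a) \<Rightarrow> nat \<Rightarrow> (nat \<Rightarrow> 'a) \<Rightarrow> bool" where
  "codebook M mu k C \<longleftrightarrow> inj_on C {..<k} \<and> C ` {..<k} \<subseteq> mu ` space M"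

definition optimal_codebook :: "'w measure \<Rightarrow> ('w \<Rightarrow> 'a::real_normed_vector) \<Rightarrow> nat \<Rightarrow> (nat \<Rightarrow> 'a) \<Rightarrow> bool" where
  "optimal_codebook M mu k C \<longleftrightarrow> codebook M mu k C \<and>
     (\<forall>C'. codebook M mu k C' \<longrightarrow> risk M mu C k \<le> risk M mu C' k)"

definition margin_condition :: "'w measure \<Rightarrow> ('w \<Rightarrow> 'a::real_normed_vector) \<Rightarrow> nat \<Rightarrow> real \<Rightarrow> real \<Rightarrow> bool" where
  "margin_condition M mu k \<kappa> \<alpha> \<longleftrightarrow> (\<exists>c0. \<forall>t. 0 \<le> t \<and> t \<le> \<kappa> \<longrightarrow>
      (\<forall>C. optimal_codebook M mu k C \<longrightarrow>
         measure M {\<omega> \<in> space M. mu \<omega> \<in> margin_nbhd C k t} \<le> c0 * t powr \<alpha>))"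

definition Linf :: "'w measure \<Rightarrow> ('w \<Rightarrow> real) \<Rightarrow> real" where
  "Linf M f = real_of_ereal (esssup M (\<lambda>\<omega>. ereal \<bar>f \<omega>\<bar>))"

definition L1 :: "'w measure \<Rightarrow> ('w \<Rightarrow> real) \<Rightarrow> real" where
  "L1 M f = integral\<^sup>L M (\<lambda>\<omega>. \<bar>f \<omega>\<bar>)"

end

theory Submission imports Defs begin

text \<open>If the nearest centres of \<open>\<mu>\<close> and \<open>\<mu>\<close>-hat differ, then \<open>\<mu>\<close> lies within twice their
  distance of a Voronoi boundary of \<open>C\<^sup>*\<close>. So with \<open>t = \<Sum>\<^sub>a \<parallel>\<mu>-hat\<^sub>a - \<mu>\<^sub>a\<parallel>\<^sub>\<infinity>\<close> the two projections
  can differ only on the event \<open>\<mu> \<in> N(2t)\<close>, of probability at most \<open>c\<^sub>0 (2t)\<^sup>\<alpha>\<close> by the margin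
  condition as long as \<open>2t \<le> \<kappa>\<close>; for larger \<open>t\<close> the trivial bound by the size of the codebook is
  itself \<open>O(t\<^sup>\<alpha>)\<close>. Finally \<open>t\<^sup>\<alpha> \<le> p\<^sup>\<alpha> \<Sum>\<^sub>a \<parallel>\<mu>-hat\<^sub>a - \<mu>\<^sub>a\<parallel>\<^sub>\<infinity>\<^sup>\<alpha>\<close>, so the bound holds even without
  its first summand.\<close>

lemma
  assumes "k \<ge> 1"
  shows nearest_idx_less: "nearest_idx C k x < k"
    and dist_nearest_idx_le: "i < k \<Longrightarrow> dist x (C (nearest_idx C k x)) \<le> dist x (C i)"
proof -
  have fin: "finite ((\<lambda>i. dist x (C i)) ` {..<k})" "(\<lambda>i. dist x (C i)) ` {..<k} \<noteq> {}"
    using assms by (auto simp: lessThan_empty_iff)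
  obtain j where "j < k" "dist x (C j) = Min ((\<lambda>i. dist x (C i)) ` {..<k})"
    using Min_in[OF fin] by auto
  with fin have "j < k \<and> (\<forall>i<k. dist x (C j) \<le> dist x (C i))"
    by auto
  then have "nearest_idx C k x < k \<and> (\<forall>i<k. dist x (C (nearest_idx C k x)) \<le> dist x (C i))"
    unfolding nearest_idx_def by (rule LeastI)
  then show "nearest_idx C k x < k" and "i < k \<Longrightarrow> dist x (C (nearest_idx C k x)) \<le> dist x (C i)"
    by auto
qed

lemma margin_nbhd_mono: "t \<le> t' \<Longrightarrow> margin_nbhd C k t \<subseteq> margin_nbhd C k t'"
  unfolding margin_nbhd_def by auto

lemma margin_nbhd_if_proj_ne:
  assumes "k \<ge> 1" "proj C k x \<noteq> proj C k y"
  shows "x \<in> margin_nbhd C k (2 * dist x y)"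
proof -
  define j where "j = nearest_idx C k x"
  define i where "i = nearest_idx C k y"
  have "j < k" "i < k"
    unfolding i_def j_def using nearest_idx_less[OF assms(1)] by auto
  have "i \<noteq> j"
    using assms(2) unfolding proj_def i_def j_def by auto
  define S where "S = {dist x (C l) | l. l < k \<and> l \<noteq> j}"
  have "finite S"
    unfolding S_def by (auto simp: setcompr_eq_image)
  have "dist x (C i) \<in> S"
    unfolding S_def using \<open>i < k\<close> \<open>i \<noteq> j\<close> by auto
  have Min_le_i: "Min S \<le> dist x (C i)"
    using Min_le[OF \<open>finite S\<close> \<open>dist x (C i) \<in> S\<close>] .
  have j_le_Min: "dist x (C j) \<le> Min S"
    using \<open>finite S\<close> \<open>dist x (C i) \<in> S\<close> dist_nearest_idx_le[OF assms(1)]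
    unfolding S_def j_def by (subst Min_ge_iff) auto
  have "dist x (C i) \<le> dist y (C i) + dist x y"
    by (metis dist_commute dist_triangle)
  also have "\<dots> \<le> dist y (C j) + dist x y"
    using dist_nearest_idx_le[OF assms(1) \<open>j < k\<close>] unfolding i_def by simp
  also have "\<dots> \<le> dist x (C j) + 2 * dist x y"
    by (smt (verit) dist_commute dist_triangle)
  finally have "\<bar>dist x (C j) - Min S\<bar> \<le> 2 * dist x y"
    using Min_le_i j_le_Min by auto
  moreover have "x \<in> voronoi C k j"
    unfolding voronoi_def j_def using dist_nearest_idx_le[OF assms(1)] by auto
  ultimately show ?thesis
    unfolding margin_nbhd_def S_def using \<open>j < k\<close> by blast
qed

lemma margin_nbhd_borel:
  fixes C :: "nat \<Rightarrow> 'a::{metric_space, second_countable_topology}"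
  shows "margin_nbhd C k t \<in> sets borel"
proof -
  have "margin_nbhd C k t = {x \<in> space borel. \<exists>j<k.
      (\<forall>i<k. i \<noteq> j \<longrightarrow> dist x (C j) \<le> dist x (C i)) \<and>
      \<bar>dist x (C j) - Min ((\<lambda>i. dist x (C i)) ` {i. i < k \<and> i \<noteq> j})\<bar> \<le> t}"
    unfolding margin_nbhd_def voronoi_def by (auto simp: setcompr_eq_image)
  then show ?thesis
    by simp measurable
qed

definition centre_dist_sum :: "(nat \<Rightarrow> 'a::metric_space) \<Rightarrow> nat \<Rightarrow> real" where
  "centre_dist_sum C k = (\<Sum>i<k. \<Sum>j<k. dist (C i) (C j))"

lemma centre_dist_sum_nonneg: "0 \<le> centre_dist_sum C k"
  unfolding centre_dist_sum_def by (intro sum_nonneg) auto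

lemma dist_proj_le_centre_dist_sum:
  assumes "k \<ge> 1"
  shows "dist (proj C k x) (proj C k y) \<le> centre_dist_sum C k"
proof -
  let ?i = "nearest_idx C k x" and ?j = "nearest_idx C k y"
  have "?i < k" "?j < k"
    using nearest_idx_less[OF assms] by auto
  have "dist (C ?i) (C ?j) \<le> (\<Sum>j<k. dist (C ?i) (C j))"
    using \<open>?j < k\<close> by (intro member_le_sum) auto
  also have "\<dots> \<le> centre_dist_sum C k"
    unfolding centre_dist_sum_def using \<open>?i < k\<close>
    by (intro member_le_sum[where f = "\<lambda>i. \<Sum>j<k. dist (C i) (C j)"]) (auto intro: sum_nonneg)
  finally show ?thesis
    unfolding proj_def .
qed

lemma esssup_abs_nonneg:
  assumes "prob_space M"
  shows "0 \<le> esssup M (\<lambda>x. ereal \<bar>f x\<bar>)"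
proof -
  interpret prob_space M by fact
  have "esssup M (\<lambda>x. ereal 0) \<le> esssup M (\<lambda>x. ereal \<bar>f x\<bar>)"
    by (rule esssup_mono) auto
  then show ?thesis
    using esssup_const[of M "ereal 0"] emeasure_space_1 by (simp add: zero_ereal_def)
qed

lemma Linf_nonneg: "prob_space M \<Longrightarrow> 0 \<le> Linf M f"
  unfolding Linf_def by (intro real_of_ereal_pos esssup_abs_nonneg)

lemma AE_abs_le_Linf:
  assumes "prob_space M" "f \<in> borel_measurable M" "AE x in M. \<bar>f x\<bar> \<le> c"
  shows "AE x in M. \<bar>f x\<bar> \<le> Linf M f"
proof -
  have "esssup M (\<lambda>x. ereal \<bar>f x\<bar>) \<le> ereal c"
    using assms(2,3) by (intro esssup_I) auto
  then have "ereal (Linf M f) = esssup M (\<lambda>x. ereal \<bar>f x\<bar>)"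
    using esssup_abs_nonneg[OF assms(1), of f] unfolding Linf_def
    by (cases "esssup M (\<lambda>x. ereal \<bar>f x\<bar>)") auto
  moreover have "AE x in M. ereal \<bar>f x\<bar> \<le> esssup M (\<lambda>x. ereal \<bar>f x\<bar>)"
    by (rule esssup_AE)
  ultimately have "AE x in M. ereal \<bar>f x\<bar> \<le> ereal (Linf M f)"
    by simp
  then show ?thesis
    by simp
qed

lemma AE_dist_le_sum_Linf:
  fixes f g :: "'w \<Rightarrow> real^'n"
  assumes "prob_space M" "f \<in> borel_measurable M" "g \<in> borel_measurable M"
    and "AE \<omega> in M. \<forall>a. \<bar>f \<omega> $ a\<bar> \<le> B" "AE \<omega> in M. \<forall>a. \<bar>g \<omega> $ a\<bar> \<le> B"
  shows "AE \<omega> in M. dist (f \<omega>) (g \<omega>) \<le> (\<Sum>a\<in>UNIV. Linf M (\<lambda>\<omega>. f \<omega> $ a - g \<omega> $ a))"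
proof -
  have "AE \<omega> in M. \<bar>f \<omega> $ a - g \<omega> $ a\<bar> \<le> Linf M (\<lambda>\<omega>. f \<omega> $ a - g \<omega> $ a)" for a
  proof (rule AE_abs_le_Linf[OF assms(1)])
    show "(\<lambda>\<omega>. f \<omega> $ a - g \<omega> $ a) \<in> borel_measurable M"
      using measurable_compose[OF assms(2) borel_measurable_nth]
        measurable_compose[OF assms(3) borel_measurable_nth] by auto
    show "AE \<omega> in M. \<bar>f \<omega> $ a - g \<omega> $ a\<bar> \<le> 2 * B"
      using assms(4,5)
    proof eventually_elim
      case (elim \<omega>)
      then have "\<bar>f \<omega> $ a\<bar> \<le> B" "\<bar>g \<omega> $ a\<bar> \<le> B"
        by auto
      then show ?case
        by linarith
    qed
  qed
  then have "AE \<omega> in M. \<forall>a\<in>UNIV. \<bar>f \<omega> $ a - g \<omega> $ a\<bar> \<le> Linf M (\<lambda>\<omega>. f \<omega> $ a - g \<omega> $ a)"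
    by (intro AE_finite_allI) auto
  then show ?thesis
  proof eventually_elim
    case (elim \<omega>)
    have "dist (f \<omega>) (g \<omega>) \<le> (\<Sum>a\<in>UNIV. \<bar>(f \<omega> - g \<omega>) $ a\<bar>)"
      unfolding dist_norm by (rule norm_le_l1_cart)
    also have "\<dots> \<le> (\<Sum>a\<in>UNIV. Linf M (\<lambda>\<omega>. f \<omega> $ a - g \<omega> $ a))"
      using elim by (intro sum_mono) auto
    finally show ?case .
  qed
qed

lemma powr_sum_le_card_powr_mult_sum_powr:
  fixes x :: "'i \<Rightarrow> real"
  assumes "finite I" "I \<noteq> {}" "\<And>i. i \<in> I \<Longrightarrow> 0 \<le> x i" "0 \<le> \<alpha>"
  shows "(\<Sum>i\<in>I. x i) powr \<alpha> \<le> real (card I) powr \<alpha> * (\<Sum>i\<in>I. x i powr \<alpha>)"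
proof -
  define m where "m = Max (x ` I)"
  have "m \<in> x ` I"
    unfolding m_def using assms(1,2) by (intro Max_in) auto
  have "0 \<le> m"
    using \<open>m \<in> x ` I\<close> assms(3) by auto
  have "(\<Sum>i\<in>I. x i) \<le> real (card I) * m"
    using sum_bounded_above[of I x m] assms(1) unfolding m_def by auto
  then have "(\<Sum>i\<in>I. x i) powr \<alpha> \<le> (real (card I) * m) powr \<alpha>"
    using assms(3,4) by (intro powr_mono2 sum_nonneg) auto
  also have "\<dots> = real (card I) powr \<alpha> * m powr \<alpha>"
    using \<open>0 \<le> m\<close> by (simp add: powr_mult)
  also have "m powr \<alpha> \<le> (\<Sum>i\<in>I. x i powr \<alpha>)"
    using \<open>m \<in> x ` I\<close> assms(1) by (auto intro!: member_le_sum)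
  finally show ?thesis
    by (simp add: mult_left_mono)
qed

lemma margin_conditionE:
  assumes "margin_condition M mu k \<kappa> \<alpha>" "optimal_codebook M mu k C" "0 < \<kappa>"
  obtains c0 where "0 \<le> c0"
    and "\<And>t. 0 \<le> t \<Longrightarrow> t \<le> \<kappa> \<Longrightarrow>
           measure M {\<omega> \<in> space M. mu \<omega> \<in> margin_nbhd C k t} \<le> c0 * t powr \<alpha>"
proof -
  obtain c0 where c0: "\<And>t. 0 \<le> t \<Longrightarrow> t \<le> \<kappa> \<Longrightarrow>
      measure M {\<omega> \<in> space M. mu \<omega> \<in> margin_nbhd C k t} \<le> c0 * t powr \<alpha>"
    using assms(1,2) unfolding margin_condition_def by blast
  have "0 \<le> c0 * \<kappa> powr \<alpha>"
    using c0[of \<kappa>] assms(3) measure_nonneg[of M] by (meson less_imp_le order.refl order_trans)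
  then have "0 \<le> c0"
    using assms(3) by (simp add: zero_le_mult_iff)
  with c0 show thesis
    using that by blast
qed

text \<open>The integrand is any \<open>g\<close> dominated by the distance of the projections, which spares
  a measurability proof for \<open>proj\<close>: a non-integrable \<open>g\<close> has integral \<open>0\<close>.\<close>

lemma integral_le_margin_measure:
  fixes C :: "nat \<Rightarrow> 'a::{metric_space, second_countable_topology}"
  assumes "prob_space M" "mu \<in> borel_measurable M" "k \<ge> 1"
    and "AE \<omega> in M. dist (muhat \<omega>) (mu \<omega>) \<le> t"
    and "\<And>\<omega>. g \<omega> \<le> dist (proj C k (muhat \<omega>)) (proj C k (mu \<omega>))"
  shows "integral\<^sup>L M g \<le> centre_dist_sum C k * measure M {\<omega> \<in> space M. mu \<omega> \<in> margin_nbhd C k (2 * t)}"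
proof (cases "integrable M g")
  case False
  then show ?thesis
    by (simp add: not_integrable_integral_eq centre_dist_sum_nonneg)
next
  case True
  interpret prob_space M by fact
  define S where "S = {\<omega> \<in> space M. mu \<omega> \<in> margin_nbhd C k (2 * t)}"
  have "S \<in> sets M"
    unfolding S_def using measurable_sets[OF assms(2) margin_nbhd_borel]
    by (simp add: Int_def vimage_def conj_commute)
  have "AE \<omega> in M. g \<omega> \<le> centre_dist_sum C k * indicator S \<omega>"
    using assms(4) AE_space
  proof eventually_elim
    case (elim \<omega>)
    show ?case
    proof (cases "proj C k (muhat \<omega>) = proj C k (mu \<omega>)")
      case True
      moreover have "0 \<le> centre_dist_sum C k * indicator S \<omega>"
        using centre_dist_sum_nonneg[of C k] by simp
      ultimately show ?thesis
        using assms(5)[of \<omega>] by simp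
    next
      case False
      then have "mu \<omega> \<in> margin_nbhd C k (2 * dist (mu \<omega>) (muhat \<omega>))"
        using margin_nbhd_if_proj_ne[OF assms(3)] by metis
      then have "\<omega> \<in> S"
        using margin_nbhd_mono[of "2 * dist (mu \<omega>) (muhat \<omega>)" "2 * t" C k] elim
        unfolding S_def by (auto simp: dist_commute)
      then show ?thesis
        using order_trans[OF assms(5) dist_proj_le_centre_dist_sum[OF assms(3)]] by simp
    qed
  qed
  then have "integral\<^sup>L M g \<le> integral\<^sup>L M (\<lambda>\<omega>. centre_dist_sum C k * indicator S \<omega>)"
    using True \<open>S \<in> sets M\<close>
    by (intro integral_mono_AE) (auto intro!: integrable_real_indicator simp: less_top[symmetric])
  also have "\<dots> = centre_dist_sum C k * measure M S"
    using \<open>S \<in> sets M\<close> by simp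
  finally show ?thesis
    unfolding S_def .
qed

lemma integral_le_centre_dist_sum:
  assumes "prob_space M" "k \<ge> 1"
    and "\<And>\<omega>. g \<omega> \<le> dist (proj C k (muhat \<omega>)) (proj C k (mu \<omega>))"
  shows "integral\<^sup>L M g \<le> centre_dist_sum C k"
proof (cases "integrable M g")
  case False
  then show ?thesis
    by (simp add: not_integrable_integral_eq centre_dist_sum_nonneg)
next
  case True
  interpret prob_space M by fact
  have "g \<omega> \<le> centre_dist_sum C k" for \<omega>
    using order_trans[OF assms(3) dist_proj_le_centre_dist_sum[OF assms(2)]] .
  then have "integral\<^sup>L M g \<le> integral\<^sup>L M (\<lambda>\<omega>. centre_dist_sum C k)"
    using True by (intro integral_mono) auto
  then show ?thesis
    by (simp add: prob_space)
qed

lemma integral_le_margin_powr: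
  fixes C :: "nat \<Rightarrow> 'a::{metric_space, second_countable_topology}"
  assumes "prob_space M" "mu \<in> borel_measurable M" "k \<ge> 1"
    and "0 < \<kappa>" "0 \<le> \<alpha>" "0 \<le> c0"
    and margin: "\<And>t. 0 \<le> t \<Longrightarrow> t \<le> \<kappa> \<Longrightarrow>
           measure M {\<omega> \<in> space M. mu \<omega> \<in> margin_nbhd C k t} \<le> c0 * t powr \<alpha>"
    and "0 \<le> t" "AE \<omega> in M. dist (muhat \<omega>) (mu \<omega>) \<le> t"
    and "\<And>\<omega>. g \<omega> \<le> dist (proj C k (muhat \<omega>)) (proj C k (mu \<omega>))"
  shows "integral\<^sup>L M g \<le> centre_dist_sum C k * (c0 + \<kappa> powr -\<alpha>) * (2 * t) powr \<alpha>"
proof -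
  let ?D = "centre_dist_sum C k"
  have "0 \<le> ?D"
    by (rule centre_dist_sum_nonneg)
  show ?thesis
  proof (cases "2 * t \<le> \<kappa>")
    case True
    have "integral\<^sup>L M g \<le> ?D * measure M {\<omega> \<in> space M. mu \<omega> \<in> margin_nbhd C k (2 * t)}"
      using integral_le_margin_measure[OF assms(1-3) assms(9,10)] .
    also have "\<dots> \<le> ?D * (c0 * (2 * t) powr \<alpha>)"
      using margin[OF _ True] \<open>0 \<le> t\<close> \<open>0 \<le> ?D\<close> by (intro mult_left_mono) auto
    also have "\<dots> \<le> ?D * (c0 + \<kappa> powr -\<alpha>) * (2 * t) powr \<alpha>"
      using \<open>0 \<le> ?D\<close> by (simp add: algebra_simps)
    finally show ?thesis .
  next
    case False
    have "1 \<le> (2 * t / \<kappa>) powr \<alpha>"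
      using False assms(4,5) by (intro ge_one_powr_ge_zero) auto
    also have "\<dots> = \<kappa> powr -\<alpha> * (2 * t) powr \<alpha>"
      using assms(4) \<open>0 \<le> t\<close> by (simp add: powr_divide powr_minus_divide)
    also have "\<dots> \<le> (c0 + \<kappa> powr -\<alpha>) * (2 * t) powr \<alpha>"
      using \<open>0 \<le> c0\<close> mult_right_mono[of "\<kappa> powr -\<alpha>" "c0 + \<kappa> powr -\<alpha>" "(2 * t) powr \<alpha>"]
      by simp
    finally have "?D * 1 \<le> ?D * ((c0 + \<kappa> powr -\<alpha>) * (2 * t) powr \<alpha>)"
      using \<open>0 \<le> ?D\<close> by (rule mult_left_mono)
    then have "?D \<le> ?D * (c0 + \<kappa> powr -\<alpha>) * (2 * t) powr \<alpha>"
      by (simp add: mult.assoc)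
    with integral_le_centre_dist_sum[where g = g and muhat = muhat and mu = mu, OF assms(1,3,10)]
    show ?thesis
      by linarith
  qed
qed

lemma integral_abs_proj_component_diff_le:
  fixes mu muhat :: "'w \<Rightarrow> real^'p" and C :: "nat \<Rightarrow> real^'p"
  assumes "prob_space M" "k \<ge> 1" "0 < \<kappa>" "0 \<le> \<alpha>" "0 \<le> c0"
    and margin: "\<And>t. 0 \<le> t \<Longrightarrow> t \<le> \<kappa> \<Longrightarrow>
           measure M {\<omega> \<in> space M. mu \<omega> \<in> margin_nbhd C k t} \<le> c0 * t powr \<alpha>"
    and "mu \<in> borel_measurable M" "AE \<omega> in M. \<forall>a. \<bar>mu \<omega> $ a\<bar> \<le> B"
    and "muhat \<in> borel_measurable M" "AE \<omega> in M. \<forall>a. \<bar>muhat \<omega> $ a\<bar> \<le> B"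
  shows "integral\<^sup>L M (\<lambda>\<omega>. \<bar>proj C k (muhat \<omega>) $ a - proj C k (mu \<omega>) $ a\<bar>)
    \<le> centre_dist_sum C k * (c0 + \<kappa> powr -\<alpha>) * (2 * real CARD('p)) powr \<alpha>
       * (\<Sum>a'\<in>UNIV. Linf M (\<lambda>\<omega>. muhat \<omega> $ a' - mu \<omega> $ a') powr \<alpha>)"
proof -
  define L where "L a' = Linf M (\<lambda>\<omega>. muhat \<omega> $ a' - mu \<omega> $ a')" for a'
  have "0 \<le> L a'" for a'
    unfolding L_def by (rule Linf_nonneg[OF assms(1)])
  have "AE \<omega> in M. dist (muhat \<omega>) (mu \<omega>) \<le> (\<Sum>a'\<in>UNIV. L a')"
    unfolding L_def using AE_dist_le_sum_Linf[OF assms(1,9,7,10,8)] .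
  moreover have "\<bar>proj C k (muhat \<omega>) $ a - proj C k (mu \<omega>) $ a\<bar>
      \<le> dist (proj C k (muhat \<omega>)) (proj C k (mu \<omega>))" for \<omega>
    using dist_vec_nth_le by (metis dist_real_def)
  ultimately have integral_bound:
    "integral\<^sup>L M (\<lambda>\<omega>. \<bar>proj C k (muhat \<omega>) $ a - proj C k (mu \<omega>) $ a\<bar>)
      \<le> centre_dist_sum C k * (c0 + \<kappa> powr -\<alpha>) * (2 * (\<Sum>a'\<in>UNIV. L a')) powr \<alpha>"
    using assms(1-5,7) margin \<open>\<And>a'. 0 \<le> L a'\<close>
    by (intro integral_le_margin_powr) (auto intro: sum_nonneg)
  have "(2 * (\<Sum>a'\<in>UNIV. L a')) powr \<alpha> = 2 powr \<alpha> * (\<Sum>a'\<in>UNIV. L a') powr \<alpha>"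
    using \<open>\<And>a'. 0 \<le> L a'\<close> by (simp add: powr_mult sum_nonneg)
  also have "\<dots> \<le> 2 powr \<alpha> * (real CARD('p) powr \<alpha> * (\<Sum>a'\<in>UNIV. L a' powr \<alpha>))"
    using powr_sum_le_card_powr_mult_sum_powr[of UNIV L \<alpha>] \<open>\<And>a'. 0 \<le> L a'\<close> assms(4)
    by (intro mult_left_mono) auto
  also have "\<dots> = (2 * real CARD('p)) powr \<alpha> * (\<Sum>a'\<in>UNIV. L a' powr \<alpha>)"
    by (simp add: powr_mult)
  finally have powr_bound:
    "(2 * (\<Sum>a'\<in>UNIV. L a')) powr \<alpha> \<le> (2 * real CARD('p)) powr \<alpha> * (\<Sum>a'\<in>UNIV. L a' powr \<alpha>)" .
  have "0 \<le> centre_dist_sum C k * (c0 + \<kappa> powr -\<alpha>)"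
    using \<open>0 \<le> c0\<close> centre_dist_sum_nonneg by (intro mult_nonneg_nonneg add_nonneg_nonneg) auto
  from integral_bound mult_left_mono[OF powr_bound this] show ?thesis
    unfolding L_def by (simp add: mult.assoc)
qed

theorem lemmaA2:
  fixes M :: "'w measure" and mu :: "'w \<Rightarrow> real^'p" and B \<kappa> \<alpha> :: real
    and k :: nat and Cs :: "nat \<Rightarrow> real^'p"
  assumes "prob_space M"
    and "mu \<in> borel_measurable M"
    and "k \<ge> 1"
    and "AE \<omega> in M. \<forall>a. \<bar>mu \<omega> $ a\<bar> \<le> B"
    and "\<kappa> > 0" and "\<alpha> > 0"
    and "margin_condition M mu k \<kappa> \<alpha>"
    and "optimal_codebook M mu k Cs"
  shows "\<exists>K. \<forall>muhat. muhat \<in> borel_measurable M \<and> (AE \<omega> in M. \<forall>a. \<bar>muhat \<omega> $ a\<bar> \<le> B) \<longrightarrow>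
     (\<forall>a. integral\<^sup>L M (\<lambda>\<omega>. \<bar>proj Cs k (muhat \<omega>) $ a - proj Cs k (mu \<omega>) $ a\<bar>)
        \<le> K * (Max ((\<lambda>j. Linf M (\<lambda>\<omega>. of_bool (0 < zeta Cs k j (muhat \<omega>))
                                    - of_bool (0 < zeta Cs k j (mu \<omega>)))) ` {..<k})
               * (\<Sum>a'\<in>UNIV. L1 M (\<lambda>\<omega>. muhat \<omega> $ a' - mu \<omega> $ a'))
             + (\<Sum>a'\<in>UNIV. (Linf M (\<lambda>\<omega>. muhat \<omega> $ a' - mu \<omega> $ a')) powr \<alpha>)))"
proof -
  obtain c0 where "0 \<le> c0" and margin: "\<And>t. 0 \<le> t \<Longrightarrow> t \<le> \<kappa> \<Longrightarrow>
      measure M {\<omega> \<in> space M. mu \<omega> \<in> margin_nbhd Cs k t} \<le> c0 * t powr \<alpha>"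
    using margin_conditionE[OF assms(7,8,5)] by blast
  define K where "K = centre_dist_sum Cs k * (c0 + \<kappa> powr -\<alpha>) * (2 * real CARD('p)) powr \<alpha>"
  have "0 \<le> K"
    unfolding K_def using \<open>0 \<le> c0\<close> centre_dist_sum_nonneg
    by (intro mult_nonneg_nonneg add_nonneg_nonneg) auto
  have bound: "integral\<^sup>L M (\<lambda>\<omega>. \<bar>proj Cs k (muhat \<omega>) $ a - proj Cs k (mu \<omega>) $ a\<bar>)
      \<le> K * (\<Sum>a'\<in>UNIV. Linf M (\<lambda>\<omega>. muhat \<omega> $ a' - mu \<omega> $ a') powr \<alpha>)"
    if "muhat \<in> borel_measurable M" "AE \<omega> in M. \<forall>a. \<bar>muhat \<omega> $ a\<bar> \<le> B" for muhat a
    unfolding K_def using assms(1-6) \<open>0 \<le> c0\<close> margin that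
    by (intro integral_abs_proj_component_diff_le) auto
  show ?thesis
    using \<open>0 \<le> K\<close> Linf_nonneg[OF assms(1)] assms(3)
    by (intro exI[of _ K] allI impI order_trans[OF bound] mult_left_mono add_increasing mult_nonneg_nonneg)
      (auto simp: Max_ge_iff lessThan_empty_iff L1_def intro!: sum_nonneg exI[of _ 0])
qed

end
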